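(* Let $\pi$ be uniform on $\mathrm{PF}_n$ and let $R(\pi)=\#\{1\le i\le n-1:\pi_i=\pi_{i+1}\}$ be the number of repeats. Then for each fixed integer $j\ge0$, $P(R(\pi)=j)\to \frac{1}{e\,j!}$ as $n\to\infty$.
   Context: A parking function of length $n$ is a sequence $(\pi_1,\dots,\pi_n)$ with $1\le\pi_i\le n$ such that $\#\{t:\pi_t\le i\}\ge i$ for all $1\le i\le n$; $\mathrm{PF}_n$ denotes the set of these. *)

theory Defs
  imports "HOL-Analysis.Analysis"
begin

text \<open>Parking functions of length n, as lists p with p!(t-1) = pi_t.\<close>
definition parking_functions :: "nat \<Rightarrow> nat list set" where
  "parking_functions n = {p. length p = n \<and> (\<forall>t<n. 1 \<le> p ! t \<and> p ! t \<le> n) \<and>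
      (\<forall>i\<in>{1..n}. card {t. t < n \<and> p ! t \<le> i} \<ge> i)}"

definition repeats :: "nat list \<Rightarrow> nat" where
  "repeats p = card {i. 1 \<le> i \<and> i \<le> length p - 1 \<and> p ! (i - 1) = p ! i}"

end

theory Submission
  imports Defs "HOL-Number_Theory.Cong" "HOL-Real_Asymp.Real_Asymp"
begin

text \<open>Pollak's argument: rotate the values of a word in \<open>{1..n+1}\<^sup>n\<close> cyclically modulo n+1.
  Each rotation class has n+1 elements and contains exactly one parking function (a cycle lemma
  for the walk whose k-th step is one less than the number of entries with value k, read cyclically;
  it drops by 1 per period since these numbers sum to n). Rotation preserves repeats, and a word of length n over an
  alphabet of size n+1 with j repeats is chosen in \<open>(n+1) \<cdot> C(n-1,j) \<cdot> n\<^bsup>n-1-j\<^esup>\<close> ways. Hence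
  \<open>P(R = j) = C(n-1,j) n\<^bsup>n-1-j\<^esup> / (n+1)\<^bsup>n-1\<^esup>\<close>, and since \<open>C(n-1,j)/n\<^sup>j \<rightarrow> 1/j!\<close> and
  \<open>(n/(n+1))\<^bsup>n-1\<^esup> \<rightarrow> 1/e\<close> the limit follows.\<close>

lemma repeats_conv_card: "repeats p = card {i. Suc i < length p \<and> p ! i = p ! Suc i}"
proof -
  have "{i. 1 \<le> i \<and> i \<le> length p - 1 \<and> p ! (i - 1) = p ! i}
      = Suc ` {i. Suc i < length p \<and> p ! i = p ! Suc i}"
  proof (intro set_eqI iffI)
    fix x assume "x \<in> {i. 1 \<le> i \<and> i \<le> length p - 1 \<and> p ! (i - 1) = p ! i}"
    then have "x = Suc (x - 1)" "x - 1 \<in> {i. Suc i < length p \<and> p ! i = p ! Suc i}" by auto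
    then show "x \<in> Suc ` {i. Suc i < length p \<and> p ! i = p ! Suc i}" by blast
  qed auto
  then show ?thesis
    unfolding repeats_def by (simp add: card_image)
qed

lemma repeats_singleton [simp]: "repeats [x] = 0"
  by (simp add: repeats_conv_card)

lemma repeats_Cons_Cons:
  "repeats (x # y # xs) = (if x = y then 1 else 0) + repeats (y # xs)"
proof -
  let ?S = "{i. Suc i < length (y # xs) \<and> (y # xs) ! i = (y # xs) ! Suc i}"
  have "{i. Suc i < length (x # y # xs) \<and> (x # y # xs) ! i = (x # y # xs) ! Suc i}
      = (if x = y then {0} else {}) \<union> Suc ` ?S"
  proof (intro set_eqI iffI)
    fix i assume i: "i \<in> {i. Suc i < length (x # y # xs) \<and> (x # y # xs) ! i = (x # y # xs) ! Suc i}"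
    show "i \<in> (if x = y then {0} else {}) \<union> Suc ` ?S"
    proof (cases i)
      case (Suc k)
      then have "k \<in> ?S" using i by auto
      then show ?thesis using Suc by blast
    qed (use i in auto)
  qed (auto split: if_splits)
  then show ?thesis
    unfolding repeats_conv_card by (simp add: card_image card_insert_if)
qed

lemma repeats_map_inj_on:
  assumes "inj_on f (set s)"
  shows "repeats (map f s) = repeats s"
proof -
  have "f (s ! i) = f (s ! Suc i) \<longleftrightarrow> s ! i = s ! Suc i" if "Suc i < length s" for i
    using that inj_onD[OF assms] by (metis Suc_lessD nth_mem)
  then show ?thesis
    unfolding repeats_conv_card by (metis (no_types, lifting) Collect_cong length_map nth_map Suc_lessD)
qed

definition words_after :: "nat set \<Rightarrow> nat \<Rightarrow> nat \<Rightarrow> nat \<Rightarrow> nat list set" where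
  "words_after X a L j = {t. length t = L \<and> set t \<subseteq> X \<and> repeats (a # t) = j}"

lemma words_after_0: "words_after X a 0 j = (if j = 0 then {[]} else {})"
  by (auto simp: words_after_def)

lemma words_after_Suc:
  "words_after X a (Suc L) j =
     (\<Union>b\<in>X - {a}. Cons b ` words_after X b L j) \<union>
     (if j = 0 \<or> a \<notin> X then {} else Cons a ` words_after X a L (j - 1))"
proof (intro set_eqI iffI)
  fix t assume t: "t \<in> words_after X a (Suc L) j"
  then obtain b u where "t = b # u"
    by (cases t) (auto simp: words_after_def)
  with t show "t \<in> (\<Union>b\<in>X - {a}. Cons b ` words_after X b L j) \<union>
      (if j = 0 \<or> a \<notin> X then {} else Cons a ` words_after X a L (j - 1))"
    by (cases "b = a") (auto simp: words_after_def repeats_Cons_Cons)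
qed (auto simp: words_after_def repeats_Cons_Cons split: if_splits)

lemma finite_words_after: "finite X \<Longrightarrow> finite (words_after X a L j)"
  by (rule rev_finite_subset[OF finite_lists_length_eq[of X L]]) (auto simp: words_after_def)

lemma card_words_after:
  assumes "finite X" "a \<in> X"
  shows "card (words_after X a L j) = (L choose j) * (card X - 1) ^ (L - j)"
  using assms(2)
proof (induction L arbitrary: a j)
  case 0
  then show ?case by (simp add: words_after_0)
next
  case (Suc L)
  let ?K = "card X - 1"
  have "card (\<Union>b\<in>X - {a}. Cons b ` words_after X b L j)
      = (\<Sum>b\<in>X - {a}. card (Cons b ` words_after X b L j))"
    by (rule card_UN_disjoint) (use assms finite_words_after in auto)
  also have "\<dots> = (\<Sum>b\<in>X - {a}. (L choose j) * ?K ^ (L - j))"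
    by (rule sum.cong) (auto simp: card_image Suc.IH)
  also have "\<dots> = (L choose j) * ?K ^ Suc (L - j)"
    using assms Suc.prems by (simp add: card_Diff_singleton)
  finally have other: "card (\<Union>b\<in>X - {a}. Cons b ` words_after X b L j)
      = (L choose j) * ?K ^ Suc (L - j)" .
  show ?case
  proof (cases j)
    case 0
    then show ?thesis using other by (simp add: words_after_Suc Suc.prems)
  next
    case (Suc i)
    have "card (words_after X a (Suc L) j)
        = card (\<Union>b\<in>X - {a}. Cons b ` words_after X b L j) + card (Cons a ` words_after X a L i)"
      unfolding words_after_Suc using Suc Suc.prems assms
      by (simp, intro card_Un_disjoint) (auto intro: finite_words_after)
    also have "\<dots> = (L choose Suc i) * ?K ^ Suc (L - Suc i) + (L choose i) * ?K ^ (L - i)"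
      using other Suc Suc.IH[OF Suc.prems] by (simp add: card_image)
    also have "\<dots> = (Suc L choose j) * ?K ^ (Suc L - j)"
      using Suc by (cases "i < L") (auto simp: Suc_diff_Suc binomial_eq_0 not_less le_Suc_eq algebra_simps)
    finally show ?thesis .
  qed
qed

lemma card_words_with_repeats:
  assumes "finite X"
  shows "card {s. length s = Suc m \<and> set s \<subseteq> X \<and> repeats s = j}
       = card X * (m choose j) * (card X - 1) ^ (m - j)"
proof -
  have "{s. length s = Suc m \<and> set s \<subseteq> X \<and> repeats s = j} = (\<Union>a\<in>X. Cons a ` words_after X a m j)"
    by (auto simp: words_after_def length_Suc_conv)
  then have "card {s. length s = Suc m \<and> set s \<subseteq> X \<and> repeats s = j}
      = (\<Sum>a\<in>X. card (Cons a ` words_after X a m j))"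
    by (simp, intro card_UN_disjoint) (use assms finite_words_after in auto)
  also have "\<dots> = (\<Sum>a\<in>X. (m choose j) * (card X - 1) ^ (m - j))"
    by (rule sum.cong) (auto simp: card_image card_words_after assms)
  finally show ?thesis by simp
qed

definition cshift :: "nat \<Rightarrow> nat \<Rightarrow> nat list \<Rightarrow> nat list" where
  "cshift N c s = map (\<lambda>v. (v - 1 + c) mod N + 1) s"

lemma length_cshift [simp]: "length (cshift N c s) = length s"
  by (simp add: cshift_def)

lemma set_cshift: "0 < N \<Longrightarrow> set (cshift N c s) \<subseteq> {1..N}"
  by (auto simp: cshift_def Suc_leI)

lemma cshift_cshift: "cshift N a (cshift N b s) = cshift N (b + a) s"
  by (simp add: cshift_def mod_add_left_eq add.assoc)

lemma cshift_mod: "cshift N (c mod N) s = cshift N c s"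
  by (simp add: cshift_def mod_add_right_eq)

lemma cshift_0:
  assumes "set s \<subseteq> {1..N}"
  shows "cshift N 0 s = s"
proof -
  have "(v - 1) mod N + 1 = v" if "v \<in> set s" for v
    using that assms by force
  then show ?thesis
    by (simp add: cshift_def map_idI)
qed

lemma cshift_inverse:
  assumes "c \<le> N" "set s \<subseteq> {1..N}"
  shows "cshift N (N - c) (cshift N c s) = s"
proof -
  have "cshift N (N - c) (cshift N c s) = cshift N (N mod N) s"
    using assms(1) by (simp only: cshift_cshift cshift_mod) simp
  then show ?thesis
    using cshift_0[OF assms(2)] by simp
qed

lemma repeats_cshift:
  assumes "set s \<subseteq> {1..N}"
  shows "repeats (cshift N c s) = repeats s"
proof -
  have "inj_on (\<lambda>v. (v - 1 + c) mod N + 1) {1..N}"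
  proof (rule inj_onI)
    fix x y :: nat
    assume "x \<in> {1..N}" "y \<in> {1..N}" "(x - 1 + c) mod N + 1 = (y - 1 + c) mod N + 1"
    then have "[x - 1 + c = y - 1 + c] (mod N)" "x - 1 < N" "y - 1 < N"
      by (auto simp: cong_def)
    then have "x - 1 = y - 1"
      by (simp add: cong_add_rcancel_nat cong_less_modulus_unique_nat)
    then show "x = y"
      using \<open>x \<in> {1..N}\<close> \<open>y \<in> {1..N}\<close> by auto
  qed
  then show ?thesis
    unfolding cshift_def using assms by (intro repeats_map_inj_on) (rule inj_on_subset)
qed

definition min_over_period :: "(nat \<Rightarrow> int) \<Rightarrow> nat \<Rightarrow> nat \<Rightarrow> bool" where
  "min_over_period Q N r \<longleftrightarrow> (\<forall>i. 0 < i \<and> i < N \<longrightarrow> Q r \<le> Q (r + i))"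

lemma min_over_period_far_apart:
  fixes Q :: "nat \<Rightarrow> int"
  assumes period: "\<And>i. Q (i + N) = Q i - 1"
    and "min_over_period Q N r" "min_over_period Q N r'" "r < r'"
  shows "r + N \<le> r'"
proof (rule ccontr)
  assume "\<not> r + N \<le> r'"
  then have "Q r \<le> Q (r + (r' - r))"
    using assms(2,4) unfolding min_over_period_def by (auto dest!: spec[of _ "r' - r"])
  moreover have "Q r' \<le> Q (r' + (N - (r' - r)))"
    using \<open>\<not> r + N \<le> r'\<close> assms(3,4) unfolding min_over_period_def
    by (auto dest!: spec[of _ "N - (r' - r)"])
  moreover have "r' + (N - (r' - r)) = r + N"
    using \<open>\<not> r + N \<le> r'\<close> \<open>r < r'\<close> by auto
  ultimately show False
    using period[of r] \<open>r < r'\<close> by (simp add: add.commute)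
qed

lemma cycle_lemma:
  fixes Q :: "nat \<Rightarrow> int"
  assumes "0 < N" and period: "\<And>i. Q (i + N) = Q i - 1"
  shows "\<exists>!r. a \<le> r \<and> r < a + N \<and> min_over_period Q N r"
proof (rule ex_ex1I)
  let ?W = "{a..<a + N}"
  define m where "m = Min (Q ` ?W)"
  have m_le: "m \<le> Q k" if "k \<in> ?W" for k
    unfolding m_def using that by simp
  have "m \<in> Q ` ?W"
    unfolding m_def using \<open>0 < N\<close> by (intro Min_in) auto
  then have "\<exists>r. r \<in> ?W \<and> Q r = m"
    by auto
  \<comment> \<open>the first minimum in the window; an earlier one would reappear lowered by one period\<close>
  define r where "r = (LEAST r. r \<in> ?W \<and> Q r = m)"
  have r: "r \<in> ?W" "Q r = m"
    using LeastI_ex[OF \<open>\<exists>r. r \<in> ?W \<and> Q r = m\<close>] unfolding r_def by auto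
  have before_r: "Q q \<noteq> m" if "a \<le> q" "q < r" for q
    using not_less_Least[of q "\<lambda>r. r \<in> ?W \<and> Q r = m"] that r(1) unfolding r_def by auto
  have "min_over_period Q N r"
    unfolding min_over_period_def
  proof (intro allI impI)
    fix i assume i: "0 < i \<and> i < N"
    show "Q r \<le> Q (r + i)"
    proof (cases "r + i < a + N")
      case True
      then show ?thesis using m_le r i by auto
    next
      case False
      define q where "q = r + i - N"
      have q: "a \<le> q" "q < r" "r + i = q + N"
        using i False r(1) unfolding q_def by auto
      then have "m < Q q"
        using m_le[of q] before_r[of q] r(1) by force
      then show ?thesis
        using q r period[of q] by simp
    qed
  qed
  with r(1) show "\<exists>r. a \<le> r \<and> r < a + N \<and> min_over_period Q N r"
    by auto
next
  show "r = r'"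
    if "a \<le> r \<and> r < a + N \<and> min_over_period Q N r"
      and "a \<le> r' \<and> r' < a + N \<and> min_over_period Q N r'" for r r'
  proof (cases r r' rule: linorder_cases)
    case less
    then show ?thesis
      using that min_over_period_far_apart[of Q N r r', OF period] by linarith
  next
    case greater
    then show ?thesis
      using that min_over_period_far_apart[of Q N r' r, OF period] by linarith
  qed
qed

lemma mod_add_eq_iff_cong:
  fixes x c k N :: nat
  assumes "k < N" "c \<le> N"
  shows "(x + c) mod N = k \<longleftrightarrow> [x = k + (N - c)] (mod N)"
proof -
  have "(x + c) mod N = k \<longleftrightarrow> [x + c = k + N] (mod N)"
    using assms by (simp add: cong_def)
  also have "k + N = k + (N - c) + c"
    using assms by simp
  also have "[x + c = k + (N - c) + c] (mod N) \<longleftrightarrow> [x = k + (N - c)] (mod N)"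
    by (rule cong_add_rcancel_nat)
  finally show ?thesis .
qed

lemma card_less_conv_sum:
  "card {t. t < n \<and> f t < i} = (\<Sum>k<i. card {t. t < (n::nat) \<and> f t = (k::nat)})"
proof -
  have "{t. t < n \<and> f t < i} = (\<Union>k<i. {t. t < n \<and> f t = k})"
    by auto
  then show ?thesis
    by (simp, intro card_UN_disjoint) auto
qed

lemma sum_lessThan_add: "(\<Sum>k<r + i. f k) = (\<Sum>k<r. f k) + (\<Sum>k<i. f (k + r :: nat))"
  by (induction i) (simp_all add: add_ac)

lemma parking_functions_subset_words:
  "parking_functions n \<subseteq> {s. length s = n \<and> set s \<subseteq> {1..Suc n}}"
  by (auto simp: parking_functions_def in_set_conv_nth le_SucI)

lemma parking_functions_iff_card_le:
  assumes "length s = n" "set s \<subseteq> {1..Suc n}"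
  shows "s \<in> parking_functions n \<longleftrightarrow> (\<forall>i\<in>{1..n}. i \<le> card {t. t < n \<and> s ! t \<le> i})"
proof
  assume "s \<in> parking_functions n"
  then show "\<forall>i\<in>{1..n}. i \<le> card {t. t < n \<and> s ! t \<le> i}"
    by (simp add: parking_functions_def)
next
  assume le_card: "\<forall>i\<in>{1..n}. i \<le> card {t. t < n \<and> s ! t \<le> i}"
  have "s ! t \<le> n" if "t < n" for t
  proof -
    have "n \<le> card {t. t < n \<and> s ! t \<le> n}"
      using le_card that by auto
    then have "{t. t < n \<and> s ! t \<le> n} = {..<n}"
      by (intro card_seteq) auto
    then show ?thesis
      using that by auto
  qed
  moreover have "1 \<le> s ! t" if "t < n" for t
    using assms that nth_mem by fastforce
  ultimately show "s \<in> parking_functions n"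
    using le_card assms(1) by (simp add: parking_functions_def)
qed

definition residue_count :: "nat \<Rightarrow> nat list \<Rightarrow> nat \<Rightarrow> nat" where
  "residue_count n s k = card {t. t < n \<and> [s ! t - 1 = k] (mod Suc n)}"

definition residue_walk :: "nat \<Rightarrow> nat list \<Rightarrow> nat \<Rightarrow> int" where
  "residue_walk n s j = int (\<Sum>k<j. residue_count n s k) - int j"

lemma residue_count_add_period: "residue_count n s (k + Suc n) = residue_count n s k"
  unfolding residue_count_def cong_def by (simp only: mod_add_self2)

lemma residue_walk_add:
  "residue_walk n s (r + i) - residue_walk n s r = int (\<Sum>k<i. residue_count n s (k + r)) - int i"
  by (simp add: residue_walk_def sum_lessThan_add)

lemma sum_residue_count: "(\<Sum>k<Suc n. residue_count n s k) = n"
proof -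
  have "n = card {t. t < n \<and> (s ! t - 1) mod Suc n < Suc n}"
    by simp
  also have "\<dots> = (\<Sum>k<Suc n. card {t. t < n \<and> (s ! t - 1) mod Suc n = k})"
    by (rule card_less_conv_sum)
  also have "\<dots> = (\<Sum>k<Suc n. residue_count n s k)"
    by (rule sum.cong) (auto simp: residue_count_def cong_def)
  finally show ?thesis ..
qed

lemma residue_walk_add_period: "residue_walk n s (i + Suc n) = residue_walk n s i - 1"
proof -
  have "(\<Sum>k<Suc n + i. residue_count n s k)
      = (\<Sum>k<Suc n. residue_count n s k) + (\<Sum>k<i. residue_count n s (k + Suc n))"
    by (rule sum_lessThan_add)
  also have "\<dots> = n + (\<Sum>k<i. residue_count n s k)"
    by (simp only: sum_residue_count residue_count_add_period)
  finally show ?thesis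
    by (simp add: residue_walk_def add.commute)
qed

context
  fixes n :: nat and s :: "nat list"
  assumes length_s: "length s = n"
begin

lemma card_cshift_le:
  assumes "c \<le> Suc n" "i \<le> n"
  shows "card {t. t < n \<and> cshift (Suc n) c s ! t \<le> i} = (\<Sum>k<i. residue_count n s (k + (Suc n - c)))"
proof -
  have "card {t. t < n \<and> cshift (Suc n) c s ! t \<le> i}
      = card {t. t < n \<and> (s ! t - 1 + c) mod Suc n < i}"
    using length_s by (auto simp: cshift_def intro: arg_cong[where f = card])
  also have "\<dots> = (\<Sum>k<i. card {t. t < n \<and> (s ! t - 1 + c) mod Suc n = k})"
    by (rule card_less_conv_sum)
  also have "\<dots> = (\<Sum>k<i. residue_count n s (k + (Suc n - c)))"
  proof (rule sum.cong)
    fix k assume "k \<in> {..<i}"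
    then have "(x + c) mod Suc n = k \<longleftrightarrow> [x = k + (Suc n - c)] (mod Suc n)" for x
      using assms by (intro mod_add_eq_iff_cong) auto
    then show "card {t. t < n \<and> (s ! t - 1 + c) mod Suc n = k} = residue_count n s (k + (Suc n - c))"
      by (simp add: residue_count_def)
  qed simp
  finally show ?thesis .
qed

lemma cshift_parking_iff:
  assumes "c \<le> Suc n"
  shows "cshift (Suc n) c s \<in> parking_functions n \<longleftrightarrow> min_over_period (residue_walk n s) (Suc n) (Suc n - c)"
proof -
  let ?r = "Suc n - c"
  have "cshift (Suc n) c s \<in> parking_functions n
      \<longleftrightarrow> (\<forall>i\<in>{1..n}. i \<le> card {t. t < n \<and> cshift (Suc n) c s ! t \<le> i})"
    using set_cshift[of "Suc n" c s] length_s by (intro parking_functions_iff_card_le) auto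
  also have "\<dots> \<longleftrightarrow> (\<forall>i\<in>{1..n}. residue_walk n s ?r \<le> residue_walk n s (?r + i))"
  proof (intro ball_cong refl)
    fix i assume "i \<in> {1..n}"
    then have "card {t. t < n \<and> cshift (Suc n) c s ! t \<le> i} = (\<Sum>k<i. residue_count n s (k + ?r))"
      using assms by (intro card_cshift_le) auto
    with residue_walk_add[of n s ?r i]
    show "i \<le> card {t. t < n \<and> cshift (Suc n) c s ! t \<le> i}
        \<longleftrightarrow> residue_walk n s ?r \<le> residue_walk n s (?r + i)"
      by linarith
  qed
  also have "\<dots> \<longleftrightarrow> min_over_period (residue_walk n s) (Suc n) ?r"
    by (auto simp: min_over_period_def)
  finally show ?thesis .
qed

lemma ex1_cshift_parking: "\<exists>!c. c < Suc n \<and> cshift (Suc n) c s \<in> parking_functions n"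
proof -
  obtain r where r: "1 \<le> r" "r < 1 + Suc n" "min_over_period (residue_walk n s) (Suc n) r"
    and unique: "\<And>r'. 1 \<le> r' \<and> r' < 1 + Suc n \<and> min_over_period (residue_walk n s) (Suc n) r' \<Longrightarrow> r' = r"
    using cycle_lemma[of "Suc n" "residue_walk n s" 1, OF _ residue_walk_add_period] by auto
  show ?thesis
  proof (rule ex1I[of _ "Suc n - r"])
    show "Suc n - r < Suc n \<and> cshift (Suc n) (Suc n - r) s \<in> parking_functions n"
      using r cshift_parking_iff[of "Suc n - r"] by auto
  next
    fix c assume c: "c < Suc n \<and> cshift (Suc n) c s \<in> parking_functions n"
    then have "Suc n - c = r"
      using cshift_parking_iff[of c] by (intro unique) auto
    with c show "c = Suc n - r"
      by auto
  qed
qed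

end

lemma cshift_parking_inj:
  assumes c: "c < Suc n" "c' < Suc n" and p: "p \<in> parking_functions n" "p' \<in> parking_functions n"
    and eq: "cshift (Suc n) c p = cshift (Suc n) c' p'"
  shows "c = c' \<and> p = p'"
proof -
  let ?N = "Suc n"
  have words: "length p = n" "set p \<subseteq> {1..?N}" "length p' = n" "set p' \<subseteq> {1..?N}"
    using p parking_functions_subset_words by blast+
  define d where "d = (c' + (?N - c)) mod ?N"
  have "p = cshift ?N d p'"
    using cshift_inverse[of c ?N p] c words eq unfolding d_def by (simp add: cshift_cshift cshift_mod)
  \<comment> \<open>both 0 and d shift p' to a parking function\<close>
  then have "d = 0"
    using ex1_cshift_parking[OF words(3)] p cshift_0[OF words(4)] unfolding d_def by force
  moreover have "c + (?N - c) = ?N"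
    using c by simp
  ultimately have "[c' + (?N - c) = c + (?N - c)] (mod ?N)"
    unfolding d_def cong_def by (simp only: mod_self)
  then have "[c' = c] (mod ?N)"
    by (simp only: cong_add_rcancel_nat)
  then have "c' = c"
    using c by (simp add: cong_less_modulus_unique_nat)
  with \<open>p = cshift ?N d p'\<close> \<open>d = 0\<close> show ?thesis
    using cshift_0[OF words(4)] by simp
qed

lemma card_words_eq_Suc_mult_card_parking:
  assumes invariant: "\<And>s c. length s = n \<Longrightarrow> set s \<subseteq> {1..Suc n} \<Longrightarrow> P (cshift (Suc n) c s) = P s"
  shows "card {s. length s = n \<and> set s \<subseteq> {1..Suc n} \<and> P s} = Suc n * card {p \<in> parking_functions n. P p}"
proof -
  let ?N = "Suc n"
  let ?W = "{s. length s = n \<and> set s \<subseteq> {1..?N} \<and> P s}"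
  let ?B = "{p \<in> parking_functions n. P p}"
  have "bij_betw (\<lambda>(c, p). cshift ?N c p) ({..<?N} \<times> ?B) ?W"
  proof (rule bij_betw_imageI)
    show "inj_on (\<lambda>(c, p). cshift ?N c p) ({..<?N} \<times> ?B)"
      by (rule inj_onI) (auto dest: cshift_parking_inj)
    show "(\<lambda>(c, p). cshift ?N c p) ` ({..<?N} \<times> ?B) = ?W"
    proof (intro set_eqI iffI)
      fix s assume "s \<in> (\<lambda>(c, p). cshift ?N c p) ` ({..<?N} \<times> ?B)"
      then obtain c p where s: "s = cshift ?N c p" and p: "p \<in> parking_functions n" "P p"
        by auto
      have "length p = n" "set p \<subseteq> {1..?N}"
        using p(1) parking_functions_subset_words by blast+
      then show "s \<in> ?W"
        using s p(2) set_cshift[of ?N c p] invariant by auto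
    next
      fix s assume s: "s \<in> ?W"
      then obtain c where c: "c < ?N" "cshift ?N c s \<in> parking_functions n"
        using ex1_cshift_parking by blast
      have "s = cshift ?N ((?N - c) mod ?N) (cshift ?N c s)"
        using cshift_inverse[of c ?N s] c s by (simp add: cshift_mod)
      moreover have "P (cshift ?N c s)"
        using invariant s by simp
      ultimately show "s \<in> (\<lambda>(c, p). cshift ?N c p) ` ({..<?N} \<times> ?B)"
        using c by (intro image_eqI[of _ _ "((?N - c) mod ?N, cshift ?N c s)"]) auto
    qed
  qed
  then show ?thesis
    by (simp add: bij_betw_same_card[symmetric] card_cartesian_product)
qed

lemma card_parking_functions: "card (parking_functions n) = Suc n ^ (n - 1)"
proof -
  have "Suc n * card (parking_functions n) = card {s. length s = n \<and> set s \<subseteq> {1..Suc n}}"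
    using card_words_eq_Suc_mult_card_parking[of n "\<lambda>_. True"] by simp
  also have "\<dots> = Suc n ^ n"
    using card_lists_length_eq[of "{1..Suc n}" n] by (simp add: conj_commute)
  finally have count: "Suc n * card (parking_functions n) = Suc n ^ n" .
  show ?thesis
  proof (cases n)
    case 0
    with count show ?thesis by simp
  next
    case (Suc k)
    with count have "Suc n * card (parking_functions n) = Suc n * Suc n ^ (n - 1)"
      by (simp only: power_Suc diff_Suc_1)
    then show ?thesis
      by (simp only: mult_left_cancel[OF Zero_not_Suc[symmetric]])
  qed
qed

lemma card_parking_functions_repeats:
  "card {p \<in> parking_functions (Suc m). repeats p = j} = (m choose j) * Suc m ^ (m - j)"
proof -
  have "Suc (Suc m) * card {p \<in> parking_functions (Suc m). repeats p = j}
      = card {s. length s = Suc m \<and> set s \<subseteq> {1..Suc (Suc m)} \<and> repeats s = j}"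
    by (rule card_words_eq_Suc_mult_card_parking[symmetric]) (simp add: repeats_cshift)
  also have "\<dots> = Suc (Suc m) * ((m choose j) * Suc m ^ (m - j))"
    by (simp only: card_words_with_repeats[OF finite_atLeastAtMost] card_atLeastAtMost
        diff_Suc_1 mult.assoc)
  finally show ?thesis
    by (simp only: mult_left_cancel[OF Zero_not_Suc[symmetric]])
qed

lemma parking_repeats_probability:
  assumes "j \<le> m"
  shows "real (card {p \<in> parking_functions (Suc m). repeats p = j}) / real (card (parking_functions (Suc m)))
       = real (m choose j) / real (Suc m) ^ j * ((real m + 1) / (real m + 2)) ^ m"
proof -
  have "real (Suc m) ^ m = real (Suc m) ^ j * real (Suc m) ^ (m - j)"
    using assms by (simp flip: power_add)
  then show ?thesis
    by (simp add: card_parking_functions_repeats card_parking_functions power_divide field_simps)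
qed

lemma binomial_div_power_tendsto: "(\<lambda>m. real (m choose j) / real (Suc m) ^ j) \<longlonglongrightarrow> 1 / fact j"
proof -
  have "real (m choose j) / real (Suc m) ^ j = (\<Prod>i<j. (real m - real i) / (real m + 1)) / fact j" for m
  proof -
    have "real (m choose j) = (\<Prod>i<j. real m - real i) / fact j"
      by (simp add: binomial_gbinomial gbinomial_prod_rev atLeast0LessThan)
    then show ?thesis
      by (simp add: prod_dividef add.commute)
  qed
  moreover have "(\<lambda>m. (\<Prod>i<j. (real m - real i) / (real m + 1)) / fact j) \<longlonglongrightarrow> (\<Prod>i<j. 1) / fact j"
    by (intro tendsto_divide tendsto_prod tendsto_const fact_nonzero) real_asymp
  ultimately show ?thesis
    by simp
qed

theorem mainTheorem10:
  fixes j :: nat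
  shows "(\<lambda>n. real (card {p \<in> parking_functions n. repeats p = j}) / real (card (parking_functions n)))
           \<longlonglongrightarrow> 1 / (exp 1 * fact j)"
proof (rule LIMSEQ_imp_Suc)
  have "(\<lambda>m::nat. ((real m + 1) / (real m + 2)) ^ m) \<longlonglongrightarrow> exp (-1)"
    by real_asymp
  then have "(\<lambda>m. real (m choose j) / real (Suc m) ^ j * ((real m + 1) / (real m + 2)) ^ m)
      \<longlonglongrightarrow> 1 / fact j * exp (-1)"
    by (intro tendsto_mult binomial_div_power_tendsto)
  moreover have "1 / fact j * exp (-1) = 1 / (exp 1 * (fact j :: real))"
    by (simp add: exp_minus field_simps)
  moreover have "\<forall>\<^sub>F m in sequentially.
      real (m choose j) / real (Suc m) ^ j * ((real m + 1) / (real m + 2)) ^ m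
      = real (card {p \<in> parking_functions (Suc m). repeats p = j}) / real (card (parking_functions (Suc m)))"
    using eventually_ge_at_top[of j] by eventually_elim (simp add: parking_repeats_probability)
  ultimately show "(\<lambda>m. real (card {p \<in> parking_functions (Suc m). repeats p = j})
      / real (card (parking_functions (Suc m)))) \<longlonglongrightarrow> 1 / (exp 1 * fact j)"
    by (auto intro: Lim_transform_eventually)
qed

end
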